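(* Let $y$ be a Lyndon word with $|y|>1$, written as $y=x^kzb$ where $x$ is a Lyndon word, $k\ge 1$, $|x|$ is the smallest period of $x^kz$, $z$ is a proper prefix of $x$ (possibly empty), $a$ is the letter such that $za$ is a prefix of $x$, and $b$ is a letter with $a<b$. For $e=0,1,\dots,k$ let $$P_e=\{\,w \text{ prefix of } y \;:\; e|x|<|w|<\min\{(e+1)|x|,\,|y|\}\,\}.$$ Then for all $0\le e<f\le k$, every $u\in P_e$ and every $v\in P_f$ satisfy $u\prec v$.
   Context: Lexicographic order $<$ on finite and infinite words: $u<v$ if $u$ is a proper prefix of $v$, or $u=ras$, $v=rbt$ with letters $a<b$. A Lyndon word is a non-empty word strictly smaller than each of its proper non-empty suffixes. Infinite ordering: for non-empty words $u,v$, $u\prec v$ iff $u^\infty<v^\infty$, or $u^\infty=v^\infty$ and $|u|>|v|$, where $u^\infty=uuu\cdots$. A period of a word $w$ is an integer $p\ge1$ with $w[i]=w[i+p]$ whenever both are defined. *)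

theory Defs
  imports Main "HOL-Library.Sublist"
begin

definition lex_less :: "'a::linorder list \<Rightarrow> 'a list \<Rightarrow> bool" where
  "lex_less u v \<longleftrightarrow> strict_prefix u v \<or>
     (\<exists>r c d s t. u = r @ [c] @ s \<and> v = r @ [d] @ t \<and> c < d)"

definition lyndon :: "'a::linorder list \<Rightarrow> bool" where
  "lyndon w \<longleftrightarrow> w \<noteq> [] \<and> (\<forall>i. 0 < i \<and> i < length w \<longrightarrow> lex_less w (drop i w))"

definition omega_word :: "'a list \<Rightarrow> nat \<Rightarrow> 'a" where
  "omega_word u = (\<lambda>i. u ! (i mod length u))"

definition inf_lex_less :: "(nat \<Rightarrow> 'a::linorder) \<Rightarrow> (nat \<Rightarrow> 'a) \<Rightarrow> bool" where
  "inf_lex_less f g \<longleftrightarrow> (\<exists>n. (\<forall>i<n. f i = g i) \<and> f n < g n)"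

definition inf_prec :: "'a::linorder list \<Rightarrow> 'a list \<Rightarrow> bool" where
  "inf_prec u v \<longleftrightarrow> inf_lex_less (omega_word u) (omega_word v) \<or>
     (omega_word u = omega_word v \<and> length u > length v)"

definition is_period :: "'a list \<Rightarrow> nat \<Rightarrow> bool" where
  "is_period w p \<longleftrightarrow> p \<ge> 1 \<and> (\<forall>i. i + p < length w \<longrightarrow> w ! i = w ! (i + p))"

definition smallest_period :: "'a list \<Rightarrow> nat \<Rightarrow> bool" where
  "smallest_period w p \<longleftrightarrow> is_period w p \<and> (\<forall>q. is_period w q \<longrightarrow> p \<le> q)"

definition Pset :: "'a list \<Rightarrow> 'a list \<Rightarrow> nat \<Rightarrow> 'a list set" where
  "Pset y x e = {w. prefix w y \<and> e * length x < length w \<and>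
                     length w < min ((e + 1) * length x) (length y)}"

end

theory Submission
  imports Defs
begin

(* Only the shape of y matters: every u in P_e is a prefix of x^omega of length m with
   e|x| < m < (e+1)|x|, and every v in P_f with f > e agrees with x^omega on its first
   (e+1)|x| letters.  So it suffices that u^omega is lexicographically below x^omega with
   a first difference before position (e+1)|x|.  For e > 0 that difference comes from
   comparing x with its shift by m mod |x|; for e = 0 from comparing x with the periodic
   word of its proper prefix of length m; both comparisons favour x because x is Lyndon. *)

lemma lex_less_nth_cases:
  assumes "lex_less u v"
  shows "(length u < length v \<and> (\<forall>t<length u. u!t = v!t)) \<or>
         (\<exists>j. j < length u \<and> j < length v \<and> (\<forall>t<j. u!t = v!t) \<and> u!j < v!j)"
  using assms unfolding lex_less_def
proof
  assume "strict_prefix u v"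
  then obtain w where "v = u @ w" "w \<noteq> []" by (auto simp: strict_prefix_def prefix_def)
  then show ?thesis by (auto simp: nth_append)
next
  assume "\<exists>r c d s t. u = r @ [c] @ s \<and> v = r @ [d] @ t \<and> c < d"
  then obtain r c d s t where "u = r @ [c] @ s" "v = r @ [d] @ t" "c < d" by blast
  then show ?thesis by (intro disjI2 exI[of _ "length r"]) (auto simp: nth_append)
qed

lemma lyndon_shift_mismatch:
  assumes "lyndon x" "0 < t" "t < length x"
  shows "\<exists>j < length x - t. (\<forall>i<j. x!(t+i) = x!i) \<and> x!j < x!(t+j)"
proof -
  have "lex_less x (drop t x)" using assms unfolding lyndon_def by blast
  from lex_less_nth_cases[OF this] show ?thesis
  proof
    assume "length x < length (drop t x) \<and> (\<forall>i<length x. x!i = drop t x ! i)"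
    then show ?thesis by (simp add: less_diff_conv)
  next
    assume "\<exists>j. j < length x \<and> j < length (drop t x) \<and> (\<forall>i<j. x!i = drop t x ! i)
              \<and> x!j < drop t x ! j"
    then obtain j where "j < length (drop t x)" "\<forall>i<j. x!i = drop t x ! i" "x!j < drop t x ! j"
      by blast
    then show ?thesis using assms(3) by (intro exI[of _ j]) auto
  qed
qed

lemma lyndon_shift_mismatch_not_less:
  assumes "lyndon x" "0 < t" "t < length x" "j < length x - t"
    and agree: "\<forall>i<j. x!(t+i) = x!i"
  shows "\<not> x!(t+j) < x!j"
proof
  assume less: "x!(t+j) < x!j"
  obtain j' where j': "\<forall>i<j'. x!(t+i) = x!i" "x!j' < x!(t+j')"
    using lyndon_shift_mismatch[OF assms(1-3)] by blast
  consider "j' < j" | "j < j'" | "j = j'" by linarith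
  then show False
    by cases (use agree less j' in \<open>auto dest: spec[of _ j] spec[of _ j']\<close>)
qed

lemma lyndon_prefix_periodic_less:
  assumes "lyndon x" "0 < r" "r < length x"
  shows "\<exists>j<length x. (\<forall>i<j. x!i = x!(i mod r)) \<and> x!(j mod r) < x!j"
proof (cases "\<forall>i<length x. x!i = x!(i mod r)")
  case True
  obtain j where j: "j < length x - r" "x!j < x!(r+j)"
    using lyndon_shift_mismatch[OF assms] by blast
  have "x!(r+j) = x!((r+j) mod r)" using True j(1) by (simp add: less_diff_conv)
  also have "\<dots> = x!j" using True j(1) by simp
  finally show ?thesis using j by auto
next
  case False
  then obtain j where j: "j < length x" "x!j \<noteq> x!(j mod r)"
    and agree: "\<forall>i<j. x!i = x!(i mod r)"
    using exists_least_iff[where P = "\<lambda>i. i < length x \<and> x!i \<noteq> x!(i mod r)"]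
    by (meson order.strict_trans)
  \<comment> \<open>If x lost at its first disagreement j with its r-periodic word, then its shift by
    r * (j div r) would beat x.\<close>
  define t where "t = r * (j div r)"
  have j_eq: "t + j mod r = j" unfolding t_def by simp
  have "r \<le> j" using j(2) by (metis mod_less not_le)
  then have "0 < t" using assms(2) by (simp add: t_def div_greater_zero_iff)
  moreover have "\<forall>i<j mod r. x!(t + i) = x!i"
  proof (intro allI impI)
    fix i assume i: "i < j mod r"
    then have "(t + i) mod r = i"
      using mod_less_divisor[OF assms(2), of j] by (simp add: t_def)
    then show "x!(t + i) = x!i" using agree i j_eq by (metis add_less_cancel_left)
  qed
  ultimately have "\<not> x!j < x!(j mod r)"
    using lyndon_shift_mismatch_not_less[OF assms(1), of t "j mod r"] j(1) j_eq by simp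
  then show ?thesis using j agree by auto
qed

lemma omega_word_nth: "i < length x \<Longrightarrow> omega_word x i = x ! i"
  by (simp add: omega_word_def)

lemma omega_word_add_mult: "omega_word x (e * length x + i) = omega_word x i"
  by (simp add: omega_word_def)

lemma lyndon_omega_periodic_prefix_less:
  assumes "lyndon x" "e * length x < m" "m < Suc e * length x"
  shows "\<exists>j < Suc e * length x. (\<forall>i<j. omega_word x (i mod m) = omega_word x i)
           \<and> omega_word x (j mod m) < omega_word x j"
proof (cases "e = 0")
  case True
  with assms have m: "0 < m" "m < length x" by auto
  obtain j where "j < length x" "\<forall>i<j. x!i = x!(i mod m)" "x!(j mod m) < x!j"
    using lyndon_prefix_periodic_less[OF assms(1) m] by blast
  moreover have "\<And>i. i mod m < length x" using m by (meson mod_less_divisor order.strict_trans)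
  ultimately show ?thesis using True by (intro exI[of _ j]) (auto simp: omega_word_nth)
next
  case False
  define r where "r = m - e * length x"
  have r: "0 < r" "r < length x" "m = e * length x + r" using assms by (auto simp: r_def)
  have "length x \<le> m" using False r(3) by (simp add: trans_le_add1)
  then have shifted: "omega_word x ((m + s) mod m) = x!s" "omega_word x (m + s) = x!(r + s)"
    if "s < length x - r" for s
  proof -
    have "(m + s) mod m = s" using that \<open>length x \<le> m\<close> by simp
    then show "omega_word x ((m + s) mod m) = x!s" using that by (simp add: omega_word_nth)
    show "omega_word x (m + s) = x!(r + s)"
      using that r(3) omega_word_add_mult[of x e "r + s"] by (simp add: omega_word_nth add.assoc)
  qed
  obtain d where d: "d < length x - r" "\<forall>i<d. x!(r+i) = x!i" "x!d < x!(r+d)"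
    using lyndon_shift_mismatch[OF assms(1) r(1,2)] by blast
  have "\<forall>i < m + d. omega_word x (i mod m) = omega_word x i"
  proof (intro allI impI)
    fix i assume i: "i < m + d"
    show "omega_word x (i mod m) = omega_word x i"
    proof (cases "i < m")
      case False
      then obtain s where "i = m + s" "s < d" using i le_Suc_ex by (metis add_less_cancel_left not_le)
      then show ?thesis using shifted[of s] d by simp
    qed simp
  qed
  moreover have "m + d < Suc e * length x" using r(3) d(1) by simp
  ultimately show ?thesis using shifted[OF d(1)] d(3) by (intro exI[of _ "m + d"]) simp
qed

lemma nth_concat_replicate:
  "i < k * length x \<Longrightarrow> concat (replicate k x) ! i = omega_word x i"
proof (induction k arbitrary: i)
  case (Suc k)
  show ?case
  proof (cases "i < length x")
    case False
    then have "concat (replicate (Suc k) x) ! i = omega_word x (i - length x)"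
      using Suc by (simp add: nth_append)
    also have "\<dots> = omega_word x i"
      using omega_word_add_mult[of x 1 "i - length x"] False by simp
    finally show ?thesis .
  qed (simp add: nth_append omega_word_nth)
qed simp

lemma prefix_concat_replicate_nth:
  assumes "prefix u (concat (replicate k x) @ w)" "i < length u" "i < k * length x"
  shows "u ! i = omega_word x i"
proof -
  have "u ! i = (concat (replicate k x) @ w) ! i"
    using assms(1,2) by (metis prefix_def nth_append)
  also have "\<dots> = omega_word x i"
    using assms(3) by (simp add: nth_append length_concat sum_list_replicate nth_concat_replicate)
  finally show ?thesis .
qed

lemma omega_word_prefix_concat_replicate:
  assumes "prefix u (concat (replicate k x) @ w)" "u \<noteq> []" "length u \<le> k * length x"
  shows "omega_word u i = omega_word x (i mod length u)"
proof -
  have "i mod length u < length u" using assms(2) by simp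
  then have "u ! (i mod length u) = omega_word x (i mod length u)"
    using assms(3) by (intro prefix_concat_replicate_nth[OF assms(1)]) auto
  then show ?thesis by (simp add: omega_word_def)
qed

theorem mainTheorem5:
  fixes y x z :: "'a::linorder list" and k :: nat and a b :: 'a
  assumes "lyndon y" and "length y > 1"
    and "y = concat (replicate k x) @ z @ [b]"
    and "lyndon x" and "k \<ge> 1"
    and "smallest_period (concat (replicate k x) @ z) (length x)"
    and "strict_prefix z x" and "prefix (z @ [a]) x" and "a < b"
  shows "\<forall>e f u v. e < f \<and> f \<le> k \<and> u \<in> Pset y x e \<and> v \<in> Pset y x f \<longrightarrow> inf_prec u v"
proof (intro allI impI)
  fix e f u v
  assume h: "e < f \<and> f \<le> k \<and> u \<in> Pset y x e \<and> v \<in> Pset y x f"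
  then have u: "prefix u y" "e * length x < length u" "length u < Suc e * length x"
    and v: "prefix v y" "f * length x < length v"
    by (auto simp: Pset_def)
  have ef: "Suc e * length x \<le> f * length x" "f * length x \<le> k * length x"
    using h by (simp_all only: mult_le_mono1 Suc_leI)
  then have "length u \<le> k * length x" using u(3) by linarith
  have "omega_word u i = omega_word x (i mod length u)" for i
    using u assms(3) \<open>length u \<le> k * length x\<close>
    by (intro omega_word_prefix_concat_replicate[where w = "z @ [b]"]) auto
  moreover have "omega_word v i = omega_word x i" if "i < f * length x" for i
  proof -
    have "i < length v" "i < k * length x" using that v(2) ef(2) by linarith+
    then show ?thesis using v(1) assms(3) by (metis omega_word_nth prefix_concat_replicate_nth)
  qed
  moreover obtain j where "j < Suc e * length x"
      "\<forall>i<j. omega_word x (i mod length u) = omega_word x i"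
      "omega_word x (j mod length u) < omega_word x j"
    using lyndon_omega_periodic_prefix_less[OF assms(4) u(2,3)] by blast
  ultimately have "inf_lex_less (omega_word u) (omega_word v)"
    unfolding inf_lex_less_def using ef(1) by (intro exI[of _ j]) auto
  then show "inf_prec u v" unfolding inf_prec_def ..
qed

end
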